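(* For $k\geq 3$ and $r\geq 2$, $$M(k;r)\leq \sum_{i=0}^{k-3}(i+1)\,M(k-i;r-1)-\frac{k^2}{2}+\frac{3k}{2}+(k-1)r.$$
   Context: A sequence of positive integers $w_1<\dots<w_n$ is an ascending wave if $w_{i+1}-w_i \geq w_i-w_{i-1}$ for $2\le i\le n-1$. $AW(k;r)$ is the least $N$ such that every $r$-coloring of $\{1,\dots,N\}$ contains a $k$-term monochromatic ascending wave. For $k\ge 2$ and $M\ge AW(k;r)$: for an $r$-coloring $\psi$ of $\{1,\dots,M\}$, $\delta_k(\psi)$ is the minimum of $w_k-w_{k-1}$ over all monochromatic $k$-term ascending waves $(w_1,\dots,w_k)$ under $\psi$, and $\Delta^M(k;r)$ is the maximum of $\delta_k(\psi)$ over all $r$-colorings $\psi$ of $\{1,\dots,M\}$. The integers $M(k;r)$ are defined by $M(k;1)=k$, $M(1;r)=1$, $M(2;r)=r+1$, and for $k\ge3$, $r\ge2$, $M(k;r)=M(k-1;r)+\Delta^{M(k-1;r)}(k-1;r)+M(k;r-1)-1$; one has $M(k;r)\ge AW(k;r)$ so these quantities are defined. *)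

theory Defs
  imports Complex_Main
begin

text \<open>A k-term ascending wave, indexed as w 1, ..., w k.\<close>
definition asc_wave :: "nat \<Rightarrow> (nat \<Rightarrow> nat) \<Rightarrow> bool" where
  "asc_wave k w \<longleftrightarrow>
     (\<forall>i\<in>{1..k}. 0 < w i) \<and>
     (\<forall>i. 1 \<le> i \<and> i < k \<longrightarrow> w i < w (Suc i)) \<and>
     (\<forall>i. 2 \<le> i \<and> i \<le> k - 1 \<longrightarrow> w (Suc i) - w i \<ge> w i - w (i - 1))"

text \<open>An r-colouring of {1..N} (colours 0..r-1; values outside {1..N} irrelevant).\<close>
definition colouring :: "nat \<Rightarrow> nat \<Rightarrow> (nat \<Rightarrow> nat) \<Rightarrow> bool" where
  "colouring N r \<psi> \<longleftrightarrow> (\<forall>i\<in>{1..N}. \<psi> i < r)"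

definition mono_wave :: "nat \<Rightarrow> nat \<Rightarrow> (nat \<Rightarrow> nat) \<Rightarrow> (nat \<Rightarrow> nat) \<Rightarrow> bool" where
  "mono_wave N k \<psi> w \<longleftrightarrow> asc_wave k w \<and> (\<forall>i\<in>{1..k}. w i \<le> N) \<and>
     (\<forall>i\<in>{1..k}. \<psi> (w i) = \<psi> (w 1))"

definition AW :: "nat \<Rightarrow> nat \<Rightarrow> nat" where
  "AW k r = (LEAST N. \<forall>\<psi>. colouring N r \<psi> \<longrightarrow> (\<exists>w. mono_wave N k \<psi> w))"

definition delta :: "nat \<Rightarrow> nat \<Rightarrow> (nat \<Rightarrow> nat) \<Rightarrow> nat" where
  "delta N k \<psi> = Min {w k - w (k - 1) | w. mono_wave N k \<psi> w}"

definition Delta :: "nat \<Rightarrow> nat \<Rightarrow> nat \<Rightarrow> nat" where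
  "Delta N k r = Max {delta N k \<psi> | \<psi>. colouring N r \<psi>}"

text \<open>M(k;r) for k \<ge> 1, r \<ge> 1 (other arguments: arbitrary values).\<close>
function Mkr :: "nat \<Rightarrow> nat \<Rightarrow> nat" where
  "Mkr k r =
     (if r \<le> 1 then k
      else if k \<le> 1 then 1
      else if k = 2 then r + 1
      else Mkr (k - 1) r + Delta (Mkr (k - 1) r) (k - 1) r + Mkr k (r - 1) - 1)"
  by auto
termination
  by (relation "measures [fst, snd]") auto

end

(*
  Put N = M(k-1;r), D = \<Delta>^N(k-1;r) and L = M(k;r-1), and r-colour {1..N+D+L-1}.
  Inside {1..N} pick a monochromatic (k-1)-wave whose last gap d is minimal, so d \<le> D.
  The L numbers starting at w_(k-1) + d either contain the colour of that wave, and
  then extend it to a k-wave, or miss it, and then form an (r-1)-colouring of L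
  consecutive numbers, which contains a k-wave of its own. Either way the last gap is
  below D + L, and by induction \<Delta>^(M(k;r))(k;r) \<le> r + \<Sum>_{j=3..k} (M(j;r-1) - 1).
  Substituting this into the recursion for M(k;r) and summing over k gives the bound.
*)
theory Submission
  imports Defs
begin

declare Mkr.simps [simp del]

lemma Mkr_pos: "k \<ge> 1 \<Longrightarrow> Mkr k r \<ge> 1"
proof (induction k r rule: Mkr.induct)
  case (1 k r)
  show ?case
  proof (cases "r \<le> 1 \<or> k \<le> 2")
    case True
    then show ?thesis
      using "1.prems" by (subst Mkr.simps) auto
  next
    case False
    have "Mkr (k - 1) r \<ge> 1" "Mkr k (r - 1) \<ge> 1"
      using False "1.prems" by (intro "1.IH"(1) "1.IH"(3); arith)+
    with False show ?thesis
      by (subst Mkr.simps) simp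
  qed
qed

lemma Mkr_one_colour [simp]: "Mkr k (Suc 0) = k"
  by (simp add: Mkr.simps)

lemma Mkr_two: "r \<ge> 1 \<Longrightarrow> Mkr 2 r = r + 1"
  by (simp add: Mkr.simps)

lemma Mkr_rec:
  "k \<ge> 3 \<Longrightarrow> r \<ge> 2 \<Longrightarrow>
    Mkr k r = Mkr (k - 1) r + Delta (Mkr (k - 1) r) (k - 1) r + Mkr k (r - 1) - 1"
  by (subst Mkr.simps) simp

lemma asc_wave_id: "asc_wave k id"
  unfolding asc_wave_def by auto

lemma asc_wave_shift: "asc_wave k v \<Longrightarrow> asc_wave k (\<lambda>i. b + v i)"
  unfolding asc_wave_def by auto

lemma asc_wave_extend:
  assumes "asc_wave m v" "m \<ge> 2" "v m + (v m - v (m - 1)) \<le> x"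
  shows "asc_wave (Suc m) (v(Suc m := x))"
proof -
  have "v (m - 1) < v m"
    using assms(1,2) unfolding asc_wave_def by (cases m) auto
  then show ?thesis
    using assms unfolding asc_wave_def
    by (auto simp: le_Suc_eq)
qed

lemma mono_wave_id: "colouring m 1 \<psi> \<Longrightarrow> mono_wave m m \<psi> id"
  unfolding mono_wave_def colouring_def using asc_wave_id by auto

lemma mono_wave_range:
  assumes "mono_wave N k \<psi> w" "i \<in> {1..k}"
  shows "w i \<in> {1..N}"
proof -
  have "0 < w i" "w i \<le> N"
    using assms unfolding mono_wave_def asc_wave_def by blast+
  then show ?thesis
    by simp
qed

lemma mono_wave_colour: "mono_wave N k \<psi> w \<Longrightarrow> i \<in> {1..k} \<Longrightarrow> \<psi> (w i) = \<psi> (w 1)"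
  unfolding mono_wave_def by blast

lemma mono_wave_gap_less:
  assumes "mono_wave N m \<psi> w" "m \<ge> 2"
  shows "w m - w (m - 1) < N"
proof -
  have "0 < w (m - 1)" "0 < w m" "w m \<le> N"
    using assms unfolding mono_wave_def asc_wave_def by auto
  then show ?thesis
    by linarith
qed

lemma mono_wave_extend:
  assumes w: "mono_wave N m \<psi> w" and "m \<ge> 2" "w m + (w m - w (m - 1)) \<le> x"
    and "x \<le> N'" "N \<le> N'" "\<psi> x = \<psi> (w 1)"
  shows "mono_wave N' (Suc m) \<psi> (w(Suc m := x))"
  unfolding mono_wave_def
proof (intro conjI ballI)
  have "asc_wave m w"
    using w unfolding mono_wave_def by simp
  then show "asc_wave (Suc m) (w(Suc m := x))"
    using assms(2,3) by (rule asc_wave_extend)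
  fix i
  assume i: "i \<in> {1..Suc m}"
  have "(w(Suc m := x)) i \<le> N' \<and> \<psi> ((w(Suc m := x)) i) = \<psi> (w 1)"
  proof (cases "i = Suc m")
    case False
    with i have "i \<in> {1..m}"
      by auto
    with w have "w i \<le> N" "\<psi> (w i) = \<psi> (w 1)"
      unfolding mono_wave_def by blast+
    with \<open>N \<le> N'\<close> False show ?thesis
      by simp
  qed (use assms(4,6) in simp)
  with \<open>m \<ge> 2\<close>
  show "(w(Suc m := x)) i \<le> N'" "\<psi> ((w(Suc m := x)) i) = \<psi> ((w(Suc m := x)) 1)"
    by simp_all
qed

lemma mono_wave_shift:
  assumes "mono_wave L k (\<lambda>i. \<psi> (b + i)) w" "b + L \<le> N"
  shows "mono_wave N k \<psi> (\<lambda>i. b + w i)"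
  using assms asc_wave_shift unfolding mono_wave_def by fastforce

lemma colouring_shift:
  "colouring N r \<psi> \<Longrightarrow> b + L \<le> N \<Longrightarrow> colouring L r (\<lambda>i. \<psi> (b + i))"
  unfolding colouring_def by simp

lemma colouring_mono: "colouring N r \<psi> \<Longrightarrow> L \<le> N \<Longrightarrow> colouring L r \<psi>"
  unfolding colouring_def by simp

lemma colouring_missing_colour:
  assumes col: "colouring N (Suc r) \<psi>" and "c \<le> r" and missing: "\<forall>i\<in>{1..N}. \<psi> i \<noteq> c"
  obtains \<phi> where "colouring N r \<phi>" "\<And>k w. mono_wave N k \<phi> w \<Longrightarrow> mono_wave N k \<psi> w"
proof
  let ?\<phi> = "\<lambda>i. if c < \<psi> i then \<psi> i - 1 else \<psi> i"
  show "colouring N r ?\<phi>"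
    unfolding colouring_def
  proof
    fix i
    assume "i \<in> {1..N}"
    with col missing have "\<psi> i < Suc r" "\<psi> i \<noteq> c"
      unfolding colouring_def by blast+
    with \<open>c \<le> r\<close> show "?\<phi> i < r"
      by auto
  qed
  fix k w
  assume wave: "mono_wave N k ?\<phi> w"
  have "\<psi> (w i) = \<psi> (w 1)" if "i \<in> {1..k}" for i
  proof -
    have "1 \<in> {1..k}"
      using that by simp
    with that have "\<psi> (w i) \<noteq> c" "\<psi> (w 1) \<noteq> c"
      using mono_wave_range[OF wave] missing by blast+
    moreover have "?\<phi> (w i) = ?\<phi> (w 1)"
      using mono_wave_colour[OF wave that] .
    ultimately show ?thesis
      by (auto split: if_splits)
  qed
  then show "mono_wave N k \<psi> w"
    using wave unfolding mono_wave_def by (simp only: Ball_def) blast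
qed

lemma mono_wave_pigeonhole:
  assumes "colouring (Suc r) r \<psi>"
  shows "\<exists>w. mono_wave (Suc r) 2 \<psi> w"
proof -
  have "card (\<psi> ` {1..Suc r}) \<le> card {..<r}"
    using assms unfolding colouring_def by (intro card_mono) auto
  then have "\<not> inj_on \<psi> {1..Suc r}"
    using card_image by fastforce
  then obtain x y where xy: "x \<in> {1..Suc r}" "y \<in> {1..Suc r}" "x \<noteq> y" "\<psi> x = \<psi> y"
    unfolding inj_on_def by blast
  have "mono_wave (Suc r) 2 \<psi> (\<lambda>i. if i \<le> 1 then min x y else max x y)"
    using xy unfolding mono_wave_def asc_wave_def by (auto simp: min_def max_def)
  then show ?thesis
    by blast
qed

lemma wave_gaps_bounded: "{w k - w (k - 1) | w. mono_wave N k \<psi> w} \<subseteq> {..N}"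
proof clarify
  fix w
  assume "mono_wave N k \<psi> w"
  then have "k \<noteq> 0 \<Longrightarrow> w k \<le> N"
    using mono_wave_range by fastforce
  then show "w k - w (k - 1) \<le> N"
    by (cases "k = 0") auto
qed

lemma finite_wave_gaps: "finite {w k - w (k - 1) | w. mono_wave N k \<psi> w}"
  using wave_gaps_bounded by (rule finite_subset) simp

lemma delta_le: "mono_wave N k \<psi> w \<Longrightarrow> delta N k \<psi> \<le> w k - w (k - 1)"
  unfolding delta_def using finite_wave_gaps by (intro Min_le) auto

lemma delta_attained:
  assumes "mono_wave N k \<psi> w"
  obtains v where "mono_wave N k \<psi> v" "v k - v (k - 1) = delta N k \<psi>"
proof -
  let ?G = "{w k - w (k - 1) | w. mono_wave N k \<psi> w}"
  have "?G \<noteq> {}"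
    using assms by blast
  with finite_wave_gaps have "Min ?G \<in> ?G"
    by (rule Min_in)
  then obtain v where "mono_wave N k \<psi> v" "v k - v (k - 1) = Min ?G"
    by auto
  then show ?thesis
    by (rule that[unfolded delta_def])
qed

lemma finite_deltas: "finite {delta N k \<psi> | \<psi>. colouring N r \<psi>}"
proof -
  have "delta N k \<psi> \<in> insert (Min {}) {..N}" for \<psi>
  proof (cases "\<exists>w. mono_wave N k \<psi> w")
    case True
    then obtain w where "mono_wave N k \<psi> w" ..
    then obtain v where v: "mono_wave N k \<psi> v" "v k - v (k - 1) = delta N k \<psi>"
      by (rule delta_attained)
    from v(1) have "v k - v (k - 1) \<in> {w k - w (k - 1) | w. mono_wave N k \<psi> w}"
      by blast
    then have "v k - v (k - 1) \<le> N"
      using wave_gaps_bounded by blast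
    then show ?thesis
      using v(2) by simp
  next
    case False
    then show ?thesis
      unfolding delta_def by simp
  qed
  then have "{delta N k \<psi> | \<psi>. colouring N r \<psi>} \<subseteq> insert (Min {}) {..N}"
    by blast
  then show ?thesis
    by (rule finite_subset) simp
qed

lemma delta_le_Delta: "colouring N r \<psi> \<Longrightarrow> delta N k \<psi> \<le> Delta N k r"
  unfolding Delta_def using finite_deltas by (intro Max_ge) auto

lemma Delta_le_if_short_waves:
  assumes "r \<ge> 1"
    and "\<And>\<psi>. colouring N r \<psi> \<Longrightarrow> \<exists>w. mono_wave N k \<psi> w \<and> w k - w (k - 1) \<le> B"
  shows "Delta N k r \<le> B"
proof -
  have "colouring N r (\<lambda>_. 0)"
    using assms(1) unfolding colouring_def by simp
  then have "Delta N k r \<in> {delta N k \<psi> | \<psi>. colouring N r \<psi>}"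
    unfolding Delta_def using finite_deltas by (intro Max_in) auto
  then obtain \<psi> where "colouring N r \<psi>" "Delta N k r = delta N k \<psi>"
    by blast
  moreover obtain w where "mono_wave N k \<psi> w" "w k - w (k - 1) \<le> B"
    using assms(2) calculation(1) by blast
  ultimately show ?thesis
    using delta_le by (metis order_trans)
qed

lemma mono_wave_Suc_step:
  assumes "m \<ge> 2" "L \<ge> 1"
    and short_waves: "\<And>\<phi>. colouring N (Suc r) \<phi> \<Longrightarrow> \<exists>w. mono_wave N m \<phi> w"
    and block_waves: "\<And>\<phi>. colouring L r \<phi> \<Longrightarrow> \<exists>w. mono_wave L (Suc m) \<phi> w"
    and col: "colouring (N + Delta N m (Suc r) + L - 1) (Suc r) \<psi>"
  shows "\<exists>w. mono_wave (N + Delta N m (Suc r) + L - 1) (Suc m) \<psi> w \<and>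
    w (Suc m) - w m < Delta N m (Suc r) + L"
proof -
  define D where "D = Delta N m (Suc r)"
  define N' where "N' = N + D + L - 1"
  have "colouring N (Suc r) \<psi>"
    using col by (rule colouring_mono) (use \<open>L \<ge> 1\<close> in simp)
  then obtain v where v: "mono_wave N m \<psi> v" "v m - v (m - 1) = delta N m \<psi>"
    and "delta N m \<psi> \<le> D"
    using short_waves delta_attained delta_le_Delta unfolding D_def by metis
  have "0 < v m" "v m \<le> N" "0 < v 1" "v 1 \<le> N"
    using v(1) \<open>m \<ge> 2\<close> unfolding mono_wave_def asc_wave_def by auto
  then have "v 1 \<in> {1..N + D + L - 1}"
    using \<open>L \<ge> 1\<close> by simp
  then have colour_bound: "\<psi> (v 1) \<le> r"
    using col unfolding colouring_def D_def by fastforce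
  define b where "b = v m + delta N m \<psi> - 1"
  have "b + L \<le> N'"
    unfolding b_def N'_def using \<open>0 < v m\<close> \<open>v m \<le> N\<close> \<open>delta N m \<psi> \<le> D\<close> \<open>L \<ge> 1\<close> by simp
  have "\<exists>w. mono_wave N' (Suc m) \<psi> w \<and> w (Suc m) - w m < D + L"
  proof (cases "\<exists>i\<in>{1..L}. \<psi> (b + i) = \<psi> (v 1)")
    case True
    then obtain i where i: "i \<in> {1..L}" "\<psi> (b + i) = \<psi> (v 1)" ..
    have "mono_wave N' (Suc m) \<psi> (v(Suc m := b + i))"
      using v i \<open>0 < v m\<close> \<open>b + L \<le> N'\<close> unfolding b_def N'_def
      by (intro mono_wave_extend[OF v(1) \<open>m \<ge> 2\<close>]) auto
    moreover have "b + i - v m < D + L"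
      using i \<open>0 < v m\<close> \<open>delta N m \<psi> \<le> D\<close> unfolding b_def atLeastAtMost_iff by arith
    ultimately show ?thesis
      using \<open>m \<ge> 2\<close> by auto
  next
    case False
    have "colouring L (Suc r) (\<lambda>i. \<psi> (b + i))"
      using col \<open>b + L \<le> N'\<close> unfolding N'_def D_def by (rule colouring_shift)
    then obtain \<phi> where "colouring L r \<phi>"
      and recoloured: "\<And>k w. mono_wave L k \<phi> w \<Longrightarrow> mono_wave L k (\<lambda>i. \<psi> (b + i)) w"
      using colour_bound False by (elim colouring_missing_colour) auto
    then obtain u where u: "mono_wave L (Suc m) \<phi> u"
      using block_waves by blast
    have "mono_wave N' (Suc m) \<psi> (\<lambda>i. b + u i)"
      using recoloured[OF u] \<open>b + L \<le> N'\<close> by (rule mono_wave_shift)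
    moreover have "u (Suc m) - u m < L"
      using mono_wave_gap_less[OF u] \<open>m \<ge> 2\<close> by simp
    ultimately show ?thesis
      by (intro exI[of _ "\<lambda>i. b + u i"]) auto
  qed
  then show ?thesis
    unfolding N'_def D_def .
qed

definition gap_bound :: "nat \<Rightarrow> nat \<Rightarrow> nat" where
  "gap_bound r m = r + (\<Sum>i<m - 2. Mkr (m - i) (r - 1) - 1)"

lemma gap_bound_two [simp]: "gap_bound r 2 = r"
  by (simp add: gap_bound_def)

lemma gap_bound_Suc:
  assumes "m \<ge> 2"
  shows "gap_bound r (Suc m) = gap_bound r m + (Mkr (Suc m) (r - 1) - 1)"
proof -
  have "Suc m - 2 = Suc (m - 2)"
    using assms by simp
  then show ?thesis
    unfolding gap_bound_def by (simp only: sum.lessThan_Suc_shift) simp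
qed

lemma mono_wave_in_Mkr:
  assumes "r \<ge> 1" "m \<ge> 2" "colouring (Mkr m r) r \<psi>"
  shows "\<exists>w. mono_wave (Mkr m r) m \<psi> w \<and> w m - w (m - 1) \<le> gap_bound r m"
  using assms
proof (induction r arbitrary: m \<psi> rule: nat_induct_at_least)
  case base
  then have "mono_wave m m \<psi> id"
    by (simp add: mono_wave_id)
  moreover have "id m - id (m - 1) \<le> gap_bound 1 m"
    using base.prems by (simp add: gap_bound_def)
  ultimately show ?case
    by auto
next
  case (Suc r)
  note fewer_colours = Suc.IH
  have "\<forall>\<psi>. colouring (Mkr m (Suc r)) (Suc r) \<psi> \<longrightarrow>
    (\<exists>w. mono_wave (Mkr m (Suc r)) m \<psi> w \<and> w m - w (m - 1) \<le> gap_bound (Suc r) m)"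
    using \<open>m \<ge> 2\<close>
  proof (induction m rule: nat_induct_at_least)
    case base
    have two: "Mkr 2 (Suc r) = Suc (Suc r)"
      by (simp add: Mkr_two)
    show ?case
    proof (intro allI impI)
      fix \<psi>
      assume "colouring (Mkr 2 (Suc r)) (Suc r) \<psi>"
      then obtain w where "mono_wave (Suc (Suc r)) 2 \<psi> w"
        using mono_wave_pigeonhole two by auto
      moreover from this have "w 2 - w 1 < Suc (Suc r)"
        using mono_wave_gap_less by fastforce
      ultimately show "\<exists>w. mono_wave (Mkr 2 (Suc r)) 2 \<psi> w \<and> w 2 - w (2 - 1) \<le> gap_bound (Suc r) 2"
        using two by auto
    qed
  next
    case (Suc m)
    let ?N = "Mkr m (Suc r)" and ?L = "Mkr (Suc m) r"
    have "?L \<ge> 1"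
      by (rule Mkr_pos) simp
    have rec: "Mkr (Suc m) (Suc r) = ?N + Delta ?N m (Suc r) + ?L - 1"
      using Mkr_rec[of "Suc m" "Suc r"] Suc.hyps \<open>r \<ge> 1\<close> by simp
    have "Delta ?N m (Suc r) \<le> gap_bound (Suc r) m"
      using Suc.IH by (intro Delta_le_if_short_waves) auto
    moreover have "gap_bound (Suc r) (Suc m) = gap_bound (Suc r) m + (?L - 1)"
      using gap_bound_Suc[OF Suc.hyps] by simp
    moreover have "\<exists>w. mono_wave (Mkr (Suc m) (Suc r)) (Suc m) \<psi> w \<and>
        w (Suc m) - w m < Delta ?N m (Suc r) + ?L"
      if "colouring (Mkr (Suc m) (Suc r)) (Suc r) \<psi>" for \<psi>
      unfolding rec
    proof (rule mono_wave_Suc_step)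
      show "\<exists>w. mono_wave ?N m \<phi> w" if "colouring ?N (Suc r) \<phi>" for \<phi>
        using Suc.IH that by blast
      show "\<exists>w. mono_wave ?L (Suc m) \<phi> w" if "colouring ?L r \<phi>" for \<phi>
        using fewer_colours[of "Suc m" \<phi>] Suc.hyps that by auto
    qed (use Suc.hyps \<open>?L \<ge> 1\<close> that[unfolded rec] in auto)
    ultimately show ?case
      using \<open>?L \<ge> 1\<close> by fastforce
  qed
  then show ?case
    using Suc.prems by blast
qed

lemma Delta_Mkr_le_gap_bound:
  "r \<ge> 1 \<Longrightarrow> m \<ge> 2 \<Longrightarrow> Delta (Mkr m r) m r \<le> gap_bound r m"
  by (intro Delta_le_if_short_waves mono_wave_in_Mkr)

lemma Mkr_increment_le:
  assumes "k \<ge> 3" "r \<ge> 2"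
  shows "Mkr k r \<le> Mkr (k - 1) r + gap_bound r k"
proof -
  have "Delta (Mkr (k - 1) r) (k - 1) r \<le> gap_bound r (k - 1)"
    using assms by (intro Delta_Mkr_le_gap_bound) auto
  moreover have "gap_bound r k = gap_bound r (k - 1) + (Mkr k (r - 1) - 1)"
    using gap_bound_Suc[of "k - 1" r] assms by simp
  moreover have "Mkr k (r - 1) \<ge> 1"
    using assms by (intro Mkr_pos) simp
  ultimately show ?thesis
    using Mkr_rec[OF assms] by linarith
qed

lemma real_gap_bound:
  "real (gap_bound r k) = real r + (\<Sum>i<k - 2. real (Mkr (k - i) (r - 1))) - real (k - 2)"
proof -
  have "real (Mkr (k - i) (r - 1) - 1) = real (Mkr (k - i) (r - 1)) - 1" if "i < k - 2" for i
    using that Mkr_pos[of "k - i" "r - 1"] by (simp add: of_nat_diff)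
  then show ?thesis
    unfolding gap_bound_def by (simp add: sum_subtractf)
qed

lemma weighted_sum_identity:
  fixes g :: "nat \<Rightarrow> real"
  shows "(\<Sum>i=0..Suc n. real (i + 1) * g (Suc n + 3 - i)) =
    (\<Sum>i=0..n. real (i + 1) * g (n + 3 - i)) + (\<Sum>i<n + 2. g (n + 4 - i))"
proof -
  have "(\<Sum>i=0..Suc n. real (i + 1) * g (Suc n + 3 - i)) =
      g (n + 4) + (\<Sum>i=0..n. real (i + 2) * g (n + 3 - i))"
    by (subst sum.atLeast0_atMost_Suc_shift) (simp add: add_ac)
  also have "(\<Sum>i=0..n. real (i + 2) * g (n + 3 - i)) =
      (\<Sum>i=0..n. real (i + 1) * g (n + 3 - i)) + (\<Sum>i<n + 1. g (n + 3 - i))"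
    by (simp add: sum.distrib[symmetric] algebra_simps atLeast0AtMost lessThan_Suc_atMost)
  also have "(\<Sum>i<n + 1. g (n + 3 - i)) = (\<Sum>i<n + 1. g (n + 4 - Suc i))"
    by (simp add: add_ac)
  also have "g (n + 4) + ((\<Sum>i=0..n. real (i + 1) * g (n + 3 - i)) + \<dots>) =
      (\<Sum>i=0..n. real (i + 1) * g (n + 3 - i)) + (\<Sum>i<Suc (n + 1). g (n + 4 - i))"
    unfolding sum.lessThan_Suc_shift by simp
  finally show ?thesis
    by simp
qed

lemma weighted_sum_bound:
  fixes f g :: "nat \<Rightarrow> real" and c :: real
  assumes start: "f 2 = c + 1"
    and step: "\<And>k. k \<ge> 3 \<Longrightarrow> f k \<le> f (k - 1) + c + (\<Sum>i<k - 2. g (k - i)) - real (k - 2)"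
    and "k \<ge> 3"
  shows "f k \<le> (\<Sum>i=0..k - 3. real (i + 1) * g (k - i))
    - real k ^ 2 / 2 + 3 * real k / 2 + (real k - 1) * c"
proof -
  have "f (n + 3) \<le> (\<Sum>i=0..n. real (i + 1) * g (n + 3 - i))
    - real (n + 3) ^ 2 / 2 + 3 * real (n + 3) / 2 + (real (n + 3) - 1) * c" for n
  proof (induction n)
    case 0
    then show ?case
      using start step[of 3] by (simp add: numeral_eq_Suc)
  next
    case (Suc n)
    have "f (Suc n + 3) \<le> f (n + 3) + c + (\<Sum>i<n + 2. g (n + 4 - i)) - real (n + 2)"
      using step[of "Suc n + 3"] by (simp add: add_ac)
    moreover have "3 * real (Suc n + 3) / 2 + (real (Suc n + 3) - 1) * c - real (Suc n + 3) ^ 2 / 2 =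
        3 * real (n + 3) / 2 + (real (n + 3) - 1) * c - real (n + 3) ^ 2 / 2 + c - real (n + 2)"
      by (simp add: power2_eq_square field_simps)
    ultimately show ?case
      using Suc.IH unfolding weighted_sum_identity by linarith
  qed
  from this[of "k - 3"] show ?thesis
    using \<open>k \<ge> 3\<close> by simp
qed

theorem lemma1p3:
  fixes k r :: nat
  assumes "k \<ge> 3" and "r \<ge> 2"
  shows "real (Mkr k r) \<le>
    (\<Sum>i=0..k-3. real (i + 1) * real (Mkr (k - i) (r - 1)))
      - real k ^ 2 / 2 + 3 * real k / 2 + (real k - 1) * real r"
proof (rule weighted_sum_bound[OF _ _ \<open>k \<ge> 3\<close>])
  show "real (Mkr 2 r) = real r + 1"
    using \<open>r \<ge> 2\<close> by (simp add: Mkr_two)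
  fix j :: nat
  assume "j \<ge> 3"
  then have "real (Mkr j r) \<le> real (Mkr (j - 1) r) + real (gap_bound r j)"
    using Mkr_increment_le[of j r] \<open>r \<ge> 2\<close> by simp
  then show "real (Mkr j r) \<le> real (Mkr (j - 1) r) + real r
      + (\<Sum>i<j - 2. real (Mkr (j - i) (r - 1))) - real (j - 2)"
    unfolding real_gap_bound by simp
qed

end
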